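(* Let $(X,d_X)$ and $(Y,d_Y)$ be metric spaces and let $d$ be a partial distance-preserving metric on $X\times Y$ with $d_\infty\le d$. Then $(X\times Y,d)$ is ultrametric if and only if for all compact sets $W\subseteq X$, $Z\subseteq Y$ and every $\varepsilon>0$ both $$\mathcal N_\varepsilon(W\times Z)=\mathcal M_\varepsilon(W\times Z)\quad\text{and}\quad \mathcal M_\varepsilon(W\times Z)=\mathcal M_\varepsilon(W)\cdot\mathcal M_\varepsilon(Z)$$ hold, where the quantities for $W$, $Z$, $W\times Z$ are computed in $(X,d_X)$, $(Y,d_Y)$, $(X\times Y,d)$ respectively.
   Context: $d_\infty((x_1,y_1),(x_2,y_2))=\max\{d_X(x_1,x_2),d_Y(y_1,y_2)\}$. A metric $d$ on $X\times Y$ is partial distance-preserving if $d((x_1,y),(x_2,y))=d_X(x_1,x_2)$ and $d((x,y_1),(x,y_2))=d_Y(y_1,y_2)$ for all $x,x_1,x_2\in X$, $y,y_1,y_2\in Y$. Ultrametric: $\rho(a,b)\le\max\{\rho(a,c),\rho(c,b)\}$. In a metric space $(M,\rho)$ with closed balls $B(c,r)=\{x:\rho(x,c)\le r\}$: $C$ is an $\varepsilon$-net for $V$ if $V\subseteq\bigcup_{c\in C}B(c,\varepsilon)$; $A$ is $\varepsilon$-distinguishable if $\rho(a,b)>\varepsilon$ for distinct $a,b\in A$. For totally bounded $V$, the covering number $\mathcal N_\varepsilon(V)$ is the smallest cardinality of a subset of $V$ that is an $\varepsilon$-net for $V$, and the packing number $\mathcal M_\varepsilon(V)$ is the maximal cardinality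 of an $\varepsilon$-distinguishable subset of $V$. *)

theory Defs
  imports "HOL-Analysis.Analysis"
begin

definition is_eps_net :: "'a set \<Rightarrow> ('a \<Rightarrow> 'a \<Rightarrow> real) \<Rightarrow> real \<Rightarrow> 'a set \<Rightarrow> 'a set \<Rightarrow> bool" where
  "is_eps_net M d \<epsilon> C V \<longleftrightarrow> V \<subseteq> (\<Union>c\<in>C. Metric_space.mcball M d c \<epsilon>)"

definition eps_distinguishable :: "('a \<Rightarrow> 'a \<Rightarrow> real) \<Rightarrow> real \<Rightarrow> 'a set \<Rightarrow> bool" where
  "eps_distinguishable d \<epsilon> A \<longleftrightarrow> (\<forall>a\<in>A. \<forall>b\<in>A. a \<noteq> b \<longrightarrow> d a b > \<epsilon>)"

definition covering_number :: "'a set \<Rightarrow> ('a \<Rightarrow> 'a \<Rightarrow> real) \<Rightarrow> real \<Rightarrow> 'a set \<Rightarrow> nat" where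
  "covering_number M d \<epsilon> V =
     (LEAST n. \<exists>C. C \<subseteq> V \<and> finite C \<and> card C = n \<and> is_eps_net M d \<epsilon> C V)"

definition packing_number :: "('a \<Rightarrow> 'a \<Rightarrow> real) \<Rightarrow> real \<Rightarrow> 'a set \<Rightarrow> nat" where
  "packing_number d \<epsilon> V =
     (GREATEST n. \<exists>A. A \<subseteq> V \<and> finite A \<and> card A = n \<and> eps_distinguishable d \<epsilon> A)"

definition ultrametric_on :: "'a set \<Rightarrow> ('a \<Rightarrow> 'a \<Rightarrow> real) \<Rightarrow> bool" where
  "ultrametric_on M d \<longleftrightarrow> (\<forall>a\<in>M. \<forall>b\<in>M. \<forall>c\<in>M. d a b \<le> max (d a c) (d c b))"

definition partial_distance_preserving ::
  "'a set \<Rightarrow> ('a \<Rightarrow> 'a \<Rightarrow> real) \<Rightarrow> 'b set \<Rightarrow> ('b \<Rightarrow> 'b \<Rightarrow> real) \<Rightarrow> ('a \<times> 'b \<Rightarrow> 'a \<times> 'b \<Rightarrow> real) \<Rightarrow> bool" where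
  "partial_distance_preserving X dX Y dY d \<longleftrightarrow>
     (\<forall>x1\<in>X. \<forall>x2\<in>X. \<forall>y\<in>Y. d (x1, y) (x2, y) = dX x1 x2) \<and>
     (\<forall>x\<in>X. \<forall>y1\<in>Y. \<forall>y2\<in>Y. d (x, y1) (x, y2) = dY y1 y2)"

definition sup_dist :: "('a \<Rightarrow> 'a \<Rightarrow> real) \<Rightarrow> ('b \<Rightarrow> 'b \<Rightarrow> real) \<Rightarrow> 'a \<times> 'b \<Rightarrow> 'a \<times> 'b \<Rightarrow> real" where
  "sup_dist dX dY p q = max (dX (fst p) (fst q)) (dY (snd p) (snd q))"

end

theory Submission
  imports Defs
begin

(* Then, in a locale for the product setting:
   - forward direction: products of maximal distinguishable nets of W and Z are both
     distinguishable and nets of W x Z, which sandwiches the packing number of W x Z;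
   - backward direction: the multiplicativity on two-point factors forces d <= sup-metric,
     hence d equals the sup-metric; then for points p, q, r the point r is a single-centre
     net of the rectangle spanned by their coordinates, and covering = packing there gives
     the ultrametric inequality d p q <= max (d p r) (d r q). *)

section \<open>Packing and covering numbers\<close>

lemma packing_number_bounded:
  assumes bound: "\<And>A. A \<subseteq> V \<Longrightarrow> finite A \<Longrightarrow> eps_distinguishable d \<epsilon> A \<Longrightarrow> card A \<le> k"
  shows "\<exists>A. A \<subseteq> V \<and> finite A \<and> card A = packing_number d \<epsilon> V \<and> eps_distinguishable d \<epsilon> A"
    and "\<And>A. A \<subseteq> V \<Longrightarrow> finite A \<Longrightarrow> eps_distinguishable d \<epsilon> A \<Longrightarrow> card A \<le> packing_number d \<epsilon> V"
proof -
  let ?P = "\<lambda>n. \<exists>A. A \<subseteq> V \<and> finite A \<and> card A = n \<and> eps_distinguishable d \<epsilon> A"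
  have P0: "?P 0" by (rule exI[of _ "{}"]) (simp add: eps_distinguishable_def)
  have le_k: "n \<le> k" if "?P n" for n using that bound by blast
  show "\<exists>A. A \<subseteq> V \<and> finite A \<and> card A = packing_number d \<epsilon> V \<and> eps_distinguishable d \<epsilon> A"
    unfolding packing_number_def using GreatestI_nat[of ?P 0 k, OF P0 le_k] by simp
  show "card A \<le> packing_number d \<epsilon> V"
    if "A \<subseteq> V" "finite A" "eps_distinguishable d \<epsilon> A" for A
    unfolding packing_number_def using Greatest_le_nat[of ?P "card A" k, OF _ le_k] that by blast
qed

lemma packing_number_le:
  assumes "\<And>A. A \<subseteq> V \<Longrightarrow> finite A \<Longrightarrow> eps_distinguishable d \<epsilon> A \<Longrightarrow> card A \<le> k"
  shows "packing_number d \<epsilon> V \<le> k"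
proof -
  obtain A where "card A = packing_number d \<epsilon> V" "A \<subseteq> V" "finite A" "eps_distinguishable d \<epsilon> A"
    using assms by (metis packing_number_bounded(1))
  then show ?thesis using assms by metis
qed

lemma packing_number_empty: "packing_number d \<epsilon> {} = 0"
  using packing_number_le[of "{}" d \<epsilon> 0] by simp

lemma packing_number_le_one:
  assumes close: "\<And>a b. a \<in> V \<Longrightarrow> b \<in> V \<Longrightarrow> d a b \<le> \<epsilon>"
  shows "packing_number d \<epsilon> V \<le> 1"
proof (rule packing_number_le)
  fix A assume A: "A \<subseteq> V" "finite A" "eps_distinguishable d \<epsilon> A"
  have "a = b" if "a \<in> A" "b \<in> A" for a b
    using A(1,3) close[of a b] that unfolding eps_distinguishable_def by force
  then show "card A \<le> 1" by (auto simp: card_le_Suc0_iff_eq[OF A(2)])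
qed

lemma two_le_packing_number:
  assumes "finite V" "a \<in> V" "b \<in> V" "a \<noteq> b" "d a b > \<epsilon>" "d b a > \<epsilon>"
  shows "2 \<le> packing_number d \<epsilon> V"
proof -
  have "card {a, b} \<le> packing_number d \<epsilon> V"
  proof (rule packing_number_bounded(2))
    show "card A \<le> card V" if "A \<subseteq> V" for A using card_mono[OF \<open>finite V\<close> that] .
    show "eps_distinguishable d \<epsilon> {a, b}"
      using assms unfolding eps_distinguishable_def by auto
  qed (use assms in auto)
  then show ?thesis using \<open>a \<noteq> b\<close> by simp
qed

lemma covering_number_le:
  assumes "C \<subseteq> V" "finite C" "is_eps_net M d \<epsilon> C V"
  shows "covering_number M d \<epsilon> V \<le> card C"
  unfolding covering_number_def by (rule Least_le) (use assms in blast)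

lemma covering_number_attained:
  assumes "C \<subseteq> V" "finite C" "is_eps_net M d \<epsilon> C V"
  shows "\<exists>C'. C' \<subseteq> V \<and> finite C' \<and> card C' = covering_number M d \<epsilon> V \<and> is_eps_net M d \<epsilon> C' V"
  unfolding covering_number_def by (rule LeastI[of _ "card C"]) (use assms in blast)

lemma covering_number_empty: "covering_number M d \<epsilon> {} = 0"
  using covering_number_le[of "{}" "{}" M d \<epsilon>] by (simp add: is_eps_net_def)

lemma (in Metric_space) compact_finite_net:
  assumes "compactin mtopology W" "\<epsilon> > 0"
  shows "\<exists>K. K \<subseteq> W \<and> finite K \<and> is_eps_net M d \<epsilon> K W"
proof -
  have "\<exists>K. finite K \<and> K \<subseteq> W \<and> W \<subseteq> (\<Union>x\<in>K. mball x \<epsilon>)"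
    using compactin_imp_mtotally_bounded[OF assms(1)] assms(2) unfolding mtotally_bounded_def
    by simp
  then obtain K where K: "finite K" "K \<subseteq> W" "W \<subseteq> (\<Union>x\<in>K. mball x \<epsilon>)"
    by (elim exE conjE)
  have "W \<subseteq> (\<Union>x\<in>K. mcball x \<epsilon>)"
    using K(3) by (meson UN_mono mball_subset_mcball order_refl order_trans)
  then show ?thesis using K(1,2) unfolding is_eps_net_def by blast
qed

text \<open>A maximum-size epsilon-distinguishable subset of V is an epsilon-net of V: a point
  not covered by it could be added to it.\<close>
lemma (in Metric_space) maximal_distinguishable_is_net:
  assumes "V \<subseteq> M" "\<epsilon> \<ge> 0" and A: "A \<subseteq> V" "finite A" "eps_distinguishable d \<epsilon> A"
    and maximal: "\<And>B. B \<subseteq> V \<Longrightarrow> finite B \<Longrightarrow> eps_distinguishable d \<epsilon> B \<Longrightarrow> card B \<le> card A"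
  shows "is_eps_net M d \<epsilon> A V"
  unfolding is_eps_net_def
proof (rule subsetI, rule ccontr)
  fix v assume v: "v \<in> V" and uncovered: "v \<notin> (\<Union>a\<in>A. mcball a \<epsilon>)"
  have vM: "v \<in> M" using v assms(1) by blast
  have far: "d a v > \<epsilon>" "d v a > \<epsilon>" if "a \<in> A" for a
  proof -
    have "\<not> d a v \<le> \<epsilon>" using uncovered that A(1) assms(1) vM by auto
    then show "d a v > \<epsilon>" "d v a > \<epsilon>" using commute[of a v] by simp_all
  qed
  have "v \<notin> A" using far(1)[of v] vM assms(2) by auto
  have dist: "eps_distinguishable d \<epsilon> (insert v A)"
    using A(3) far unfolding eps_distinguishable_def by blast
  have "card (insert v A) \<le> card A"
    by (rule maximal[OF _ _ dist]) (use A(1,2) v in auto)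
  then show False using \<open>v \<notin> A\<close> A(2) by simp
qed

section \<open>Ultrametric sets\<close>

lemma ultrametric_on_subset: "ultrametric_on M d \<Longrightarrow> V \<subseteq> M \<Longrightarrow> ultrametric_on V d"
  unfolding ultrametric_on_def by blast

text \<open>In an ultrametric set, distinct points of an epsilon-distinguishable set cannot share
  a centre of an epsilon-net, so the net is at least as large.\<close>
lemma (in Metric_space) ultrametric_net_bounds_distinguishable:
  assumes "V \<subseteq> M" "ultrametric_on V d"
    and C: "C \<subseteq> V" "finite C" "is_eps_net M d \<epsilon> C V"
    and A: "A \<subseteq> V" "eps_distinguishable d \<epsilon> A"
  shows "card A \<le> card C"
proof -
  have "\<forall>a\<in>A. \<exists>c. c \<in> C \<and> d c a \<le> \<epsilon>"
    using C(3) A(1) unfolding is_eps_net_def by fastforce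
  then obtain f where f: "\<And>a. a \<in> A \<Longrightarrow> f a \<in> C \<and> d (f a) a \<le> \<epsilon>"
    by metis
  have "inj_on f A"
  proof (rule inj_onI, rule ccontr)
    fix a b assume ab: "a \<in> A" "b \<in> A" "f a = f b" "a \<noteq> b"
    have "d a b \<le> max (d a (f a)) (d (f a) b)"
      using assms(2) ab f[of a] C(1) A(1) unfolding ultrametric_on_def by blast
    also have "\<dots> \<le> \<epsilon>"
      using f[of a] f[of b] ab commute[of a "f a"] by simp
    finally show False using A(2) ab unfolding eps_distinguishable_def by force
  qed
  then show ?thesis using card_inj_on_le[of f A C] f C(2) by blast
qed

lemma (in Metric_space) ultrametric_packing_net:
  assumes VM: "V \<subseteq> M" and um: "ultrametric_on V d" and "\<epsilon> \<ge> 0"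
    and C: "C \<subseteq> V" "finite C" "is_eps_net M d \<epsilon> C V"
  shows "\<exists>A. A \<subseteq> V \<and> finite A \<and> card A = packing_number d \<epsilon> V \<and>
             eps_distinguishable d \<epsilon> A \<and> is_eps_net M d \<epsilon> A V"
proof -
  note bound = ultrametric_net_bounds_distinguishable[OF VM um C]
  obtain A where A: "A \<subseteq> V" "finite A" "card A = packing_number d \<epsilon> V"
      "eps_distinguishable d \<epsilon> A"
    using packing_number_bounded(1)[OF bound] by blast
  have "is_eps_net M d \<epsilon> A V"
    using maximal_distinguishable_is_net[OF VM \<open>\<epsilon> \<ge> 0\<close> A(1,2,4)]
      packing_number_bounded(2)[OF bound] A(3) by metis
  then show ?thesis using A by blast
qed

lemma (in Metric_space) ultrametric_covering_eq_packing:
  assumes VM: "V \<subseteq> M" and um: "ultrametric_on V d" and "\<epsilon> \<ge> 0"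
    and C: "C \<subseteq> V" "finite C" "is_eps_net M d \<epsilon> C V"
  shows "covering_number M d \<epsilon> V = packing_number d \<epsilon> V"
proof -
  obtain A where A: "A \<subseteq> V" "finite A" "card A = packing_number d \<epsilon> V"
      "eps_distinguishable d \<epsilon> A" "is_eps_net M d \<epsilon> A V"
    using ultrametric_packing_net[OF assms] by blast
  obtain C' where C': "C' \<subseteq> V" "finite C'" "card C' = covering_number M d \<epsilon> V"
      "is_eps_net M d \<epsilon> C' V"
    using covering_number_attained[OF C] by blast
  have "covering_number M d \<epsilon> V \<le> packing_number d \<epsilon> V"
    using covering_number_le[OF A(1,2,5)] A(3) by simp
  moreover have "packing_number d \<epsilon> V \<le> covering_number M d \<epsilon> V"
    using ultrametric_net_bounds_distinguishable[OF VM um C'(1,2,4) A(1,4)] A(3) C'(3) by simp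
  ultimately show ?thesis by simp
qed

section \<open>Partial distance-preserving metrics dominating the sup-metric\<close>

locale dominated_product =
  X: Metric_space X dX + Y: Metric_space Y dY + P: Metric_space "X \<times> Y" d
  for X :: "'a set" and dX and Y :: "'b set" and dY and d +
  assumes partial: "partial_distance_preserving X dX Y dY d"
    and dominates: "\<forall>p\<in>X \<times> Y. \<forall>q\<in>X \<times> Y. sup_dist dX dY p q \<le> d p q"
begin

lemma dist_fst: "x1 \<in> X \<Longrightarrow> x2 \<in> X \<Longrightarrow> y \<in> Y \<Longrightarrow> d (x1, y) (x2, y) = dX x1 x2"
  using partial unfolding partial_distance_preserving_def by blast

lemma dist_snd: "x \<in> X \<Longrightarrow> y1 \<in> Y \<Longrightarrow> y2 \<in> Y \<Longrightarrow> d (x, y1) (x, y2) = dY y1 y2"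
  using partial unfolding partial_distance_preserving_def by blast

lemma sup_dist_le: "p \<in> X \<times> Y \<Longrightarrow> q \<in> X \<times> Y \<Longrightarrow> sup_dist dX dY p q \<le> d p q"
  using dominates by blast

text \<open>The factors embed isometrically as slices, so they inherit the ultrametric property.\<close>
lemma ultrametric_fst:
  assumes "ultrametric_on (X \<times> Y) d" "y \<in> Y"
  shows "ultrametric_on X dX"
  using assms unfolding ultrametric_on_def by (metis dist_fst mem_Sigma_iff)

lemma ultrametric_snd:
  assumes "ultrametric_on (X \<times> Y) d" "x \<in> X"
  shows "ultrametric_on Y dY"
  using assms unfolding ultrametric_on_def by (metis dist_snd mem_Sigma_iff)

text \<open>For an ultrametric d, products of epsilon-nets are epsilon-nets: moving one coordinate
  at a time costs at most epsilon each, and the ultrametric inequality takes the maximum.\<close>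
lemma product_net:
  assumes um: "ultrametric_on (X \<times> Y) d" and "A \<subseteq> X" "B \<subseteq> Y" "W \<subseteq> X" "Z \<subseteq> Y"
    and nets: "is_eps_net X dX \<epsilon> A W" "is_eps_net Y dY \<epsilon> B Z"
  shows "is_eps_net (X \<times> Y) d \<epsilon> (A \<times> B) (W \<times> Z)"
  unfolding is_eps_net_def
proof (rule subsetI, clarify)
  fix w z assume "w \<in> W" "z \<in> Z"
  then obtain a b where a: "a \<in> A" "dX a w \<le> \<epsilon>" and b: "b \<in> B" "dY b z \<le> \<epsilon>"
    using nets unfolding is_eps_net_def by fastforce
  have inXY: "a \<in> X" "w \<in> X" "b \<in> Y" "z \<in> Y"
    using a b assms \<open>w \<in> W\<close> \<open>z \<in> Z\<close> by auto
  have "d (a, b) (w, z) \<le> max (d (a, b) (w, b)) (d (w, b) (w, z))"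
    using um inXY unfolding ultrametric_on_def by blast
  also have "\<dots> = max (dX a w) (dY b z)" using dist_fst dist_snd inXY by simp
  also have "\<dots> \<le> \<epsilon>" using a b by simp
  finally show "(w, z) \<in> (\<Union>c\<in>A \<times> B. P.mcball c \<epsilon>)" using inXY a b by force
qed

text \<open>Since d dominates the sup-metric, products of epsilon-distinguishable sets are
  epsilon-distinguishable.\<close>
lemma product_distinguishable:
  assumes "A \<subseteq> X" "B \<subseteq> Y" "eps_distinguishable dX \<epsilon> A" "eps_distinguishable dY \<epsilon> B"
  shows "eps_distinguishable d \<epsilon> (A \<times> B)"
  unfolding eps_distinguishable_def
proof (intro ballI impI)
  fix p q assume pq: "p \<in> A \<times> B" "q \<in> A \<times> B" "p \<noteq> q"
  then have "fst p \<noteq> fst q \<or> snd p \<noteq> snd q" by (simp add: prod_eq_iff)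
  then have "\<epsilon> < dX (fst p) (fst q) \<or> \<epsilon> < dY (snd p) (snd q)"
    using pq assms(3,4) unfolding eps_distinguishable_def by (auto simp: mem_Times_iff)
  then have "\<epsilon> < max (dX (fst p) (fst q)) (dY (snd p) (snd q))"
    by (simp add: less_max_iff_disj)
  also have "\<dots> \<le> d p q"
    using sup_dist_le[of p q] pq assms(1,2) unfolding sup_dist_def by blast
  finally show "\<epsilon> < d p q" .
qed

lemma counts_of_ultrametric:
  assumes um: "ultrametric_on (X \<times> Y) d"
    and W: "compactin X.mtopology W" and Z: "compactin Y.mtopology Z" and "\<epsilon> > 0"
  shows "covering_number (X \<times> Y) d \<epsilon> (W \<times> Z) = packing_number d \<epsilon> (W \<times> Z) \<and>
         packing_number d \<epsilon> (W \<times> Z) = packing_number dX \<epsilon> W * packing_number dY \<epsilon> Z"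
proof (cases "W = {} \<or> Z = {}")
  case True
  then show ?thesis by (auto simp: covering_number_empty packing_number_empty)
next
  case False
  have WX: "W \<subseteq> X" and ZY: "Z \<subseteq> Y"
    using W Z compactin_subset_topspace by fastforce+
  obtain x y where "x \<in> X" "y \<in> Y" using False WX ZY by blast
  then have umW: "ultrametric_on W dX" and umZ: "ultrametric_on Z dY"
    using ultrametric_fst[OF um] ultrametric_snd[OF um] ultrametric_on_subset WX ZY by blast+
  have WZ: "W \<times> Z \<subseteq> X \<times> Y" using WX ZY by auto
  have umWZ: "ultrametric_on (W \<times> Z) d" by (rule ultrametric_on_subset[OF um WZ])
  have "\<epsilon> \<ge> 0" using \<open>\<epsilon> > 0\<close> by simp
  obtain KW where "KW \<subseteq> W" "finite KW" "is_eps_net X dX \<epsilon> KW W"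
    using X.compact_finite_net[OF W \<open>\<epsilon> > 0\<close>] by blast
  then obtain A where A: "A \<subseteq> W" "finite A" "card A = packing_number dX \<epsilon> W"
      "eps_distinguishable dX \<epsilon> A" "is_eps_net X dX \<epsilon> A W"
    using X.ultrametric_packing_net[OF WX umW \<open>\<epsilon> \<ge> 0\<close>] by blast
  obtain KZ where "KZ \<subseteq> Z" "finite KZ" "is_eps_net Y dY \<epsilon> KZ Z"
    using Y.compact_finite_net[OF Z \<open>\<epsilon> > 0\<close>] by blast
  then obtain B where B: "B \<subseteq> Z" "finite B" "card B = packing_number dY \<epsilon> Z"
      "eps_distinguishable dY \<epsilon> B" "is_eps_net Y dY \<epsilon> B Z"
    using Y.ultrametric_packing_net[OF ZY umZ \<open>\<epsilon> \<ge> 0\<close>] by blast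
  have AX: "A \<subseteq> X" and BY: "B \<subseteq> Y" using A(1) B(1) WX ZY by auto
  have AB: "A \<times> B \<subseteq> W \<times> Z" "finite (A \<times> B)" "is_eps_net (X \<times> Y) d \<epsilon> (A \<times> B) (W \<times> Z)"
    using A(1,2) B(1,2) product_net[OF um AX BY WX ZY A(5) B(5)] by auto
  note cov_eq_pack = P.ultrametric_covering_eq_packing[OF WZ umWZ \<open>\<epsilon> \<ge> 0\<close> AB]
  have "covering_number (X \<times> Y) d \<epsilon> (W \<times> Z) \<le> card (A \<times> B)"
    by (rule covering_number_le[OF AB])
  moreover have "card (A \<times> B) \<le> packing_number d \<epsilon> (W \<times> Z)"
    using packing_number_bounded(2)[of "W \<times> Z" d \<epsilon> "card (A \<times> B)"]
      P.ultrametric_net_bounds_distinguishable[OF WZ umWZ AB] AB(1,2)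
      product_distinguishable[OF AX BY A(4) B(4)] by blast
  ultimately show ?thesis
    using cov_eq_pack A(3) B(3) card_cartesian_product[of A B] by simp
qed

text \<open>For p and q at sup-distance e, both
  factors {fst p, fst q} and {snd p, snd q} have packing number at most one at scale e, hence
  so does their product, which therefore cannot contain the e-far pair p, q.\<close>
lemma dist_le_sup_dist:
  assumes mult: "\<And>W Z \<epsilon>. finite W \<Longrightarrow> W \<subseteq> X \<Longrightarrow> finite Z \<Longrightarrow> Z \<subseteq> Y \<Longrightarrow> \<epsilon> > 0 \<Longrightarrow>
      packing_number d \<epsilon> (W \<times> Z) = packing_number dX \<epsilon> W * packing_number dY \<epsilon> Z"
    and p: "p \<in> X \<times> Y" and q: "q \<in> X \<times> Y"
  shows "d p q \<le> sup_dist dX dY p q"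
proof (cases "p = q")
  case True
  then show ?thesis using p by (simp add: sup_dist_def le_max_iff_disj)
next
  case False
  define e where "e = sup_dist dX dY p q"
  define W where "W = {fst p, fst q}"
  define Z where "Z = {snd p, snd q}"
  have "e > 0"
    using False p q unfolding e_def sup_dist_def by (auto simp: prod_eq_iff less_max_iff_disj)
  have "packing_number dX e W \<le> 1"
    using p q X.commute unfolding W_def e_def sup_dist_def
    by (intro packing_number_le_one) (auto simp: max_def)
  moreover have "packing_number dY e Z \<le> 1"
    using p q Y.commute unfolding Z_def e_def sup_dist_def
    by (intro packing_number_le_one) (auto simp: max_def)
  moreover have "packing_number d e (W \<times> Z) = packing_number dX e W * packing_number dY e Z"
    by (rule mult) (use p q \<open>e > 0\<close> in \<open>auto simp: W_def Z_def\<close>)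
  ultimately have "packing_number d e (W \<times> Z) \<le> 1"
    using mult_le_mono[of _ 1 _ 1] by (metis nat_mult_1)
  moreover have "p \<in> W \<times> Z" "q \<in> W \<times> Z" "finite (W \<times> Z)"
    unfolding W_def Z_def by (auto simp: mem_Times_iff)
  ultimately show ?thesis
    using two_le_packing_number[of "W \<times> Z" p q e d] False P.commute[of p q]
    unfolding e_def by force
qed

text \<open>Given p, q, r and m = max (d p r) (d r q), the
  point r alone is an m-net of the rectangle spanned by the coordinates of p, q, r, so its
  packing number is at most one and p, q cannot be m-far apart.\<close>
lemma ultrametric_of_counts:
  assumes sup_eq: "\<And>p q. p \<in> X \<times> Y \<Longrightarrow> q \<in> X \<times> Y \<Longrightarrow> d p q = sup_dist dX dY p q"
    and cov_eq_pack: "\<And>W Z \<epsilon>. finite W \<Longrightarrow> W \<subseteq> X \<Longrightarrow> finite Z \<Longrightarrow> Z \<subseteq> Y \<Longrightarrow> \<epsilon> > 0 \<Longrightarrow>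
      covering_number (X \<times> Y) d \<epsilon> (W \<times> Z) = packing_number d \<epsilon> (W \<times> Z)"
  shows "ultrametric_on (X \<times> Y) d"
  unfolding ultrametric_on_def
proof (intro ballI)
  fix p q r assume pqr: "p \<in> X \<times> Y" "q \<in> X \<times> Y" "r \<in> X \<times> Y"
  define m where "m = max (d p r) (d r q)"
  define W where "W = {fst p, fst q, fst r}"
  define Z where "Z = {snd p, snd q, snd r}"
  show "d p q \<le> max (d p r) (d r q)"
  proof (cases "m = 0")
    case True
    then have "d p r \<le> 0" "d r q \<le> 0" unfolding m_def by auto
    then have "p = r" "r = q"
      using pqr P.nonneg[of p r] P.nonneg[of r q] P.zero by (meson order_antisym)+
    then show ?thesis using pqr by simp
  next
    case False
    then have "m > 0" using P.nonneg[of p r] unfolding m_def by linarith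
    have WZ: "finite (W \<times> Z)" "W \<times> Z \<subseteq> X \<times> Y" "p \<in> W \<times> Z" "q \<in> W \<times> Z" "r \<in> W \<times> Z"
      using pqr unfolding W_def Z_def by (auto simp: mem_Times_iff)
    have "d v r \<le> m" if "v \<in> W \<times> Z" for v
      using that pqr sup_eq[of v r] sup_eq[of p r] sup_eq[of r q] X.commute Y.commute WZ(2)
      unfolding W_def Z_def m_def sup_dist_def by (auto simp: mem_Times_iff le_max_iff_disj)
    then have "is_eps_net (X \<times> Y) d m {r} (W \<times> Z)"
      using WZ(2,5) P.commute unfolding is_eps_net_def by fastforce
    then have "covering_number (X \<times> Y) d m (W \<times> Z) \<le> 1"
      using covering_number_le[of "{r}" "W \<times> Z"] WZ(5) by simp
    moreover have "covering_number (X \<times> Y) d m (W \<times> Z) = packing_number d m (W \<times> Z)"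
      by (rule cov_eq_pack) (use pqr \<open>m > 0\<close> in \<open>auto simp: W_def Z_def\<close>)
    ultimately have "packing_number d m (W \<times> Z) \<le> 1" by simp
    show ?thesis
    proof (rule ccontr)
      assume far: "\<not> d p q \<le> max (d p r) (d r q)"
      then have "p \<noteq> q" using pqr by (auto simp: le_max_iff_disj)
      have "m < d p q" "m < d q p" using far P.commute[of q p] unfolding m_def by auto
      then have "2 \<le> packing_number d m (W \<times> Z)"
        by (rule two_le_packing_number[OF WZ(1,3,4) \<open>p \<noteq> q\<close>])
      then show False using \<open>packing_number d m (W \<times> Z) \<le> 1\<close> by simp
    qed
  qed
qed

end

theorem proposition4p4:
  fixes X :: "'a set" and dX :: "'a \<Rightarrow> 'a \<Rightarrow> real"
    and Y :: "'b set" and dY :: "'b \<Rightarrow> 'b \<Rightarrow> real"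
    and d :: "'a \<times> 'b \<Rightarrow> 'a \<times> 'b \<Rightarrow> real"
  assumes "Metric_space X dX" and "Metric_space Y dY" and "Metric_space (X \<times> Y) d"
    and "partial_distance_preserving X dX Y dY d"
    and "\<forall>p\<in>X \<times> Y. \<forall>q\<in>X \<times> Y. sup_dist dX dY p q \<le> d p q"
  shows "ultrametric_on (X \<times> Y) d \<longleftrightarrow>
    (\<forall>W Z \<epsilon>. compactin (Metric_space.mtopology X dX) W \<and>
              compactin (Metric_space.mtopology Y dY) Z \<and> \<epsilon> > 0 \<longrightarrow>
       covering_number (X \<times> Y) d \<epsilon> (W \<times> Z) = packing_number d \<epsilon> (W \<times> Z) \<and>
       packing_number d \<epsilon> (W \<times> Z) = packing_number dX \<epsilon> W * packing_number dY \<epsilon> Z)"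
    (is "_ \<longleftrightarrow> (\<forall>W Z \<epsilon>. ?compact W Z \<epsilon> \<longrightarrow> ?counts W Z \<epsilon>)")
proof -
  interpret dominated_product X dX Y dY d
    using assms by (simp add: dominated_product_def dominated_product_axioms_def)
  have finite_compact: "?compact W Z \<epsilon>"
    if "finite W" "W \<subseteq> X" "finite Z" "Z \<subseteq> Y" "\<epsilon> > 0" for W Z \<epsilon>
    using that by (auto intro!: finite_imp_compactin)
  show ?thesis
  proof
    assume "\<forall>W Z \<epsilon>. ?compact W Z \<epsilon> \<longrightarrow> ?counts W Z \<epsilon>"
    then have counts: "?counts W Z \<epsilon>"
      if "finite W" "W \<subseteq> X" "finite Z" "Z \<subseteq> Y" "\<epsilon> > 0" for W Z \<epsilon>
      using finite_compact[OF that] by blast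
    have "d p q = sup_dist dX dY p q" if "p \<in> X \<times> Y" "q \<in> X \<times> Y" for p q
      using dist_le_sup_dist[OF _ that] sup_dist_le[OF that] counts by (meson order_antisym)
    then show "ultrametric_on (X \<times> Y) d"
      using ultrametric_of_counts counts by blast
  qed (use counts_of_ultrametric in blast)
qed

end
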